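(* Let $f \in C^1(\mathcal{T})$ and $g \in C^1([0,1])$, where $\mathcal{T}=\{(x,y)\in\mathbb{R}^2: 0\le y\le x\le 1\}$. Let $k\in C^1(\mathcal{T})$ be the solution of the Goursat problem $$k_y(x,y)+k_x(x,y)=f(x,y)-\int_y^x f(x,\eta)k(\eta,y)\,d\eta \ \ \forall (x,y)\in\mathcal{T},\qquad k(1,y)=0\ \ \forall y\in[0,1].$$ Let $l\in C^1(\mathcal{T})$ be the inverse kernel, i.e., the kernel for which the inverse of the map $w\mapsto w(x)-\int_0^x k(x,y)w(y)\,dy$ is $u\mapsto u(x)+\int_0^x l(x,y)u(y)\,dy$. Define $p_1(x)=g(x)-k(x,0)$ and $$\theta(x)=p_1(x)+\int_0^x l(x,y)p_1(y)\,dy,\qquad x\in[0,1].$$ Consider the plant $$u_t(x,t)=u_x(x,t)+g(x)u(0,t)+\int_0^x f(x,y)u(y,t)\,dy,\qquad u(1,t)=U(t),\qquad Y(t)=u(0,t),$$ with $u(\cdot,0)=u_0$, and the observer $$\hat u_t(x,t)=\hat u_x(x,t)+g(x)\hat u(0,t)+\int_0^x f(x,y)\hat u(y,t)\,dy+p_1(x)\,[u(0,t)-\hat u(0,t)],\qquad \hat u(1,t)=U(t),$$ with $\hat u(\cdot,0)=\hat u_0$. Let $U\in C^1(\mathbb{R}^+)$ and $u_0,\hat u_0\in C^1([0,1])$ satisfy $$u_0(1)=U(0),\qquad \dot U(0)=u_0'(1)+g(1)u_0(0)+\int_0^1 f(1,y)u_0(y)\,dy,$$ $$\hat u_0(1)=U(0),\qquad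 \dot U(0)=\hat u_0'(1)+g(1)\hat u_0(0)+\int_0^1 f(1,y)\hat u_0(y)\,dy+p_1(1)\,[u_0(0)-\hat u_0(0)].$$ Then the solution satisfies, for all $t\ge 1$ and all $x\in[0,1]$, $$\hat u(x,t)=\hat w(x,t)-\int_0^x k(x,y)\hat w(y,t)\,dy,$$ where $$\hat w(x,t)=\int_{t+x-1}^{t}\theta(t+x-\tau)\,Y(\tau)\,d\tau+U(t+x-1),\qquad x\in[0,1].$$
   Context: $\mathbb{R}^+=[0,\infty)$. The Goursat problem for $k$ has a unique $C^1(\mathcal{T})$ solution; the inverse kernel $l$ exists in $C^1(\mathcal{T})$. Under the stated compatibility conditions the plant and observer systems have unique classical solutions defined for all $t\ge 0$. *)

theory Defs
  imports "HOL-Analysis.Analysis"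
begin

definition Tri :: "(real \<times> real) set" where
  "Tri = {(x, y). 0 \<le> y \<and> y \<le> x \<and> x \<le> 1}"

definition Dom :: "(real \<times> real) set" where
  "Dom = {0..1} \<times> {0..}"

definition C1_partials_on ::
  "(real \<times> real) set \<Rightarrow> (real \<Rightarrow> real \<Rightarrow> real) \<Rightarrow> (real \<Rightarrow> real \<Rightarrow> real)
     \<Rightarrow> (real \<Rightarrow> real \<Rightarrow> real) \<Rightarrow> bool" where
  "C1_partials_on S F F1 F2 \<longleftrightarrow>
     continuous_on S (case_prod F1) \<and> continuous_on S (case_prod F2) \<and>
     (\<forall>z\<in>S. (case_prod F has_derivative (\<lambda>h. F1 (fst z) (snd z) * fst h + F2 (fst z) (snd z) * snd h))
                (at z within S))"

definition C1_on2 :: "(real \<times> real) set \<Rightarrow> (real \<Rightarrow> real \<Rightarrow> real) \<Rightarrow> bool" where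
  "C1_on2 S F \<longleftrightarrow> (\<exists>F1 F2. C1_partials_on S F F1 F2)"

definition C1_deriv_on :: "real set \<Rightarrow> (real \<Rightarrow> real) \<Rightarrow> (real \<Rightarrow> real) \<Rightarrow> bool" where
  "C1_deriv_on S F F' \<longleftrightarrow> continuous_on S F' \<and>
     (\<forall>x\<in>S. (F has_real_derivative F' x) (at x within S))"

end

(* Pass the observer state through the inverse backstepping transformation,
   W = uh + L uh, so that uh = W - K W.  Because k solves the Goursat problem,
   the integral terms of the observer cancel after an integration by parts in
   the kernel and an exchange of the order of integration over the triangle,
   leaving (I - K)(W_t - W_x) = p1 Y; applying (I - K)^(-1) = I + L gives the
   pure transport equation W_t - W_x = theta(x) Y(t).  As k(1, .) = 0, also
   W(1, t) = U(t), and for t >= 1 the characteristic x + t = const through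
   (x, t) leaves the boundary x = 1 at the time t + x - 1 >= 0, so integrating
   along it gives W = wh. *)

theory Submission
  imports Defs
begin

lemma continuous_on_compose_case_prod:
  assumes "continuous_on S (\<lambda>(x, y). F x y)" "continuous_on A a" "continuous_on A b"
    and "\<And>p. p \<in> A \<Longrightarrow> (a p, b p) \<in> S"
  shows "continuous_on A (\<lambda>p. F (a p) (b p))"
  using continuous_on_compose2[OF assms(1), of A "\<lambda>p. (a p, b p)"] assms
  by (auto intro!: continuous_intros)

lemma integral_derivative_eq_diff:
  fixes f f' :: "real \<Rightarrow> real"
  assumes "a \<le> b" "\<And>x. x \<in> {a..b} \<Longrightarrow> (f has_real_derivative f' x) (at x within {a..b})"
  shows "integral {a..b} f' = f b - f a"
  using fundamental_theorem_of_calculus[of a b f f'] assms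
  by (simp add: has_real_derivative_iff_has_vector_derivative integral_unique)

lemma has_real_derivative_unique_Icc:
  fixes f :: "real \<Rightarrow> real"
  assumes "a < b" "x \<in> {a..b}"
    and "(f has_real_derivative D1) (at x within {a..b})" "(f has_real_derivative D2) (at x within {a..b})"
  shows "D1 = D2"
  using has_field_derivative_unique[of f D1 x "{a..b}" D2] assms
  by (simp add: trivial_limit_within islimpt_Icc)

lemma affine_unit_interval_in_Icc:
  fixes a b r :: real
  assumes "a \<le> b" "r \<in> {0..1}"
  shows "a + (b - a) * r \<in> {a..b}"
  using assms mult_left_le[of r "b - a"] by auto

lemma integral_rescale_unit:
  fixes g :: "real \<Rightarrow> real"
  assumes "a \<le> b" "continuous_on {a..b} g"
  shows "integral {a..b} g = (b - a) * integral {0..1} (\<lambda>r. g (a + (b - a) * r))"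
proof -
  have "((\<lambda>r. (b - a) *\<^sub>R g (a + (b - a) * r)) has_integral
          integral {a + (b - a) * 0..a + (b - a) * 1} g) {0..1}"
  proof (rule has_integral_substitution[where c=a and d=b])
    show "(\<lambda>r. a + (b - a) * r) ` {0..1} \<subseteq> {a..b}"
      using affine_unit_interval_in_Icc[of a b] assms(1) by auto
  qed (use assms in \<open>auto intro!: derivative_eq_intros\<close>)
  then have "integral {0..1} (\<lambda>r. (b - a) * g (a + (b - a) * r)) = integral {a..b} g"
    by (intro integral_unique) simp
  then show ?thesis
    by simp
qed

lemma continuous_on_integral_bounds:
  fixes lo hi :: "'p::topological_space \<Rightarrow> real" and \<phi> :: "'p \<Rightarrow> real \<Rightarrow> real"
  assumes "continuous_on P lo" "continuous_on P hi" "\<And>p. p \<in> P \<Longrightarrow> lo p \<le> hi p"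
    and \<phi>: "continuous_on {(p, z). p \<in> P \<and> lo p \<le> z \<and> z \<le> hi p} (\<lambda>(p, z). \<phi> p z)"
  shows "continuous_on P (\<lambda>p. integral {lo p..hi p} (\<phi> p))"
proof -
  let ?\<psi> = "\<lambda>p r. \<phi> p (lo p + (hi p - lo p) * r)"
  have "continuous_on (P \<times> cbox 0 1) (\<lambda>(p, r). ?\<psi> p r)"
    unfolding case_prod_beta
  proof (rule continuous_on_compose_case_prod[OF \<phi>])
    show "(fst q, lo (fst q) + (hi (fst q) - lo (fst q)) * snd q) \<in> {(p, z). p \<in> P \<and> lo p \<le> z \<and> z \<le> hi p}"
      if "q \<in> P \<times> cbox 0 1" for q
    proof -
      have "fst q \<in> P" "snd q \<in> {0..1}"
        using that by (auto simp: mem_Times_iff cbox_interval)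
      then show ?thesis
        using assms(3) affine_unit_interval_in_Icc[of "lo (fst q)" "hi (fst q)" "snd q"] by auto
    qed
  qed (intro continuous_intros continuous_on_compose2[OF assms(1)] continuous_on_compose2[OF assms(2)]; auto)+
  then have "continuous_on P (\<lambda>p. (hi p - lo p) * integral (cbox 0 1) (?\<psi> p))"
    by (intro continuous_intros assms integral_continuous_on_param)
  moreover have "integral {lo p..hi p} (\<phi> p) = (hi p - lo p) * integral (cbox 0 1) (?\<psi> p)" if "p \<in> P" for p
  proof -
    have "continuous_on {lo p..hi p} (\<phi> p)"
      using continuous_on_compose_case_prod[OF \<phi>, of "{lo p..hi p}" "\<lambda>_. p" "\<lambda>z. z"] that
      by (auto intro!: continuous_intros)
    then show ?thesis
      using integral_rescale_unit[of "lo p" "hi p" "\<phi> p"] assms(3) that by (simp add: cbox_interval)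
  qed
  ultimately show ?thesis
    by (simp add: continuous_on_eq)
qed

lemma C1_partials_on_continuous:
  "C1_partials_on S F F1 F2 \<Longrightarrow> continuous_on S (\<lambda>(x, y). F x y)"
  unfolding C1_partials_on_def
  by (intro has_derivative_continuous_on) (auto simp: case_prod_beta)

lemma C1_partials_on_continuous_partials:
  "C1_partials_on S F F1 F2 \<Longrightarrow> continuous_on S (\<lambda>(x, y). F1 x y)"
  "C1_partials_on S F F1 F2 \<Longrightarrow> continuous_on S (\<lambda>(x, y). F2 x y)"
  by (simp_all add: C1_partials_on_def)

lemma C1_partials_on_has_real_derivative_line:
  assumes C: "C1_partials_on S F F1 F2"
    and A: "\<And>s. s \<in> A \<Longrightarrow> (p + \<alpha> * s, q + \<beta> * s) \<in> S" and s: "s \<in> A"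
  shows "((\<lambda>s. F (p + \<alpha> * s) (q + \<beta> * s)) has_real_derivative
           \<alpha> * F1 (p + \<alpha> * s) (q + \<beta> * s) + \<beta> * F2 (p + \<alpha> * s) (q + \<beta> * s)) (at s within A)"
proof -
  let ?\<gamma> = "\<lambda>s. (p + \<alpha> * s, q + \<beta> * s)"
  let ?D = "\<lambda>h. F1 (p + \<alpha> * s) (q + \<beta> * s) * fst h + F2 (p + \<alpha> * s) (q + \<beta> * s) * snd h"
  have "(case_prod F has_derivative ?D) (at (?\<gamma> s) within S)"
    using C A[OF s] unfolding C1_partials_on_def by force
  then have "(case_prod F has_derivative ?D) (at (?\<gamma> s) within ?\<gamma> ` A)"
    by (rule has_derivative_subset) (use A in auto)
  then have "((case_prod F \<circ> ?\<gamma>) has_derivative (?D \<circ> (\<lambda>h. (\<alpha> * h, \<beta> * h)))) (at s within A)"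
    by (intro diff_chain_within) (auto intro!: derivative_eq_intros)
  then have "((\<lambda>s. F (p + \<alpha> * s) (q + \<beta> * s)) has_derivative
      (\<lambda>h. F1 (p + \<alpha> * s) (q + \<beta> * s) * (\<alpha> * h) + F2 (p + \<alpha> * s) (q + \<beta> * s) * (\<beta> * h))) (at s within A)"
    by (simp add: o_def)
  then show ?thesis
    unfolding has_field_derivative_def
    by (rule has_derivative_eq_rhs) (auto simp: fun_eq_iff algebra_simps)
qed

lemma C1_partials_on_has_real_derivative_fst:
  assumes "C1_partials_on S F F1 F2" "\<And>x'. x' \<in> A \<Longrightarrow> (x', y) \<in> S" "x \<in> A"
  shows "((\<lambda>x. F x y) has_real_derivative F1 x y) (at x within A)"
  using C1_partials_on_has_real_derivative_line[of S F F1 F2 A 0 1 y 0 x] assms by simp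

lemma C1_partials_on_has_real_derivative_snd:
  assumes "C1_partials_on S F F1 F2" "\<And>y'. y' \<in> A \<Longrightarrow> (x, y') \<in> S" "y \<in> A"
  shows "((\<lambda>y. F x y) has_real_derivative F2 x y) (at y within A)"
  using C1_partials_on_has_real_derivative_line[of S F F1 F2 A x 0 0 1 y] assms by simp

lemma C1_partials_on_add:
  assumes F: "C1_partials_on S F F1 F2" and G: "C1_partials_on S G G1 G2"
  shows "C1_partials_on S (\<lambda>x y. F x y + G x y) (\<lambda>x y. F1 x y + G1 x y) (\<lambda>x y. F2 x y + G2 x y)"
  unfolding C1_partials_on_def
proof (intro conjI ballI)
  show "continuous_on S (\<lambda>(x, y). F1 x y + G1 x y)" "continuous_on S (\<lambda>(x, y). F2 x y + G2 x y)"
    using F G by (auto simp: C1_partials_on_def case_prod_beta intro!: continuous_intros)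
  fix z assume "z \<in> S"
  then have "((\<lambda>z. case_prod F z + case_prod G z) has_derivative
      (\<lambda>h. (F1 (fst z) (snd z) * fst h + F2 (fst z) (snd z) * snd h)
          + (G1 (fst z) (snd z) * fst h + G2 (fst z) (snd z) * snd h))) (at z within S)"
    using F G unfolding C1_partials_on_def by (intro has_derivative_add) auto
  then show "((\<lambda>(x, y). F x y + G x y) has_derivative
      (\<lambda>h. (F1 (fst z) (snd z) + G1 (fst z) (snd z)) * fst h + (F2 (fst z) (snd z) + G2 (fst z) (snd z)) * snd h))
      (at z within S)"
    by (simp add: case_prod_beta' algebra_simps)
qed

lemma C1_partials_on_TimesI:
  fixes F F1 F2 :: "real \<Rightarrow> real \<Rightarrow> real"
  assumes "convex Y"
    and dx: "\<And>x y. x \<in> X \<Longrightarrow> y \<in> Y \<Longrightarrow> ((\<lambda>x. F x y) has_real_derivative F1 x y) (at x within X)"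
    and dy: "\<And>x y. x \<in> X \<Longrightarrow> y \<in> Y \<Longrightarrow> ((\<lambda>y. F x y) has_real_derivative F2 x y) (at y within Y)"
    and "continuous_on (X \<times> Y) (\<lambda>(x, y). F1 x y)" and c2: "continuous_on (X \<times> Y) (\<lambda>(x, y). F2 x y)"
  shows "C1_partials_on (X \<times> Y) F F1 F2"
  unfolding C1_partials_on_def
proof (intro conjI ballI assms)
  fix z assume z: "z \<in> X \<times> Y"
  obtain x y where xy: "z = (x, y)" "x \<in> X" "y \<in> Y"
    using z by auto
  have "continuous_on (X \<times> Y) (\<lambda>(x, y). blinfun_mult_right (F2 x y))"
    using c2 by (auto simp: case_prod_beta intro!: continuous_intros)
  then have "((\<lambda>(x, y). F x y) has_derivative (\<lambda>(hx, hy). F1 x y * hx + F2 x y * hy)) (at (x, y) within X \<times> Y)"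
    using has_derivative_partialsI[where f=F and fx="(*) (F1 x y)" and x=x and y=y and X=X and Y=Y
        and fy="\<lambda>x y. blinfun_mult_right (F2 x y)"]
      dx[OF xy(2,3)] dy xy z \<open>convex Y\<close>
    by (auto simp: has_field_derivative_def continuous_on_eq_continuous_within)
  then show "(case_prod F has_derivative (\<lambda>h. F1 (fst z) (snd z) * fst h + F2 (fst z) (snd z) * snd h))
      (at z within X \<times> Y)"
    unfolding xy(1) by (rule has_derivative_eq_rhs) (auto simp: fun_eq_iff)
qed

(* Continues H beyond the diagonal by its first-order Taylor polynomial in a,
   so that a \<mapsto> H a z becomes differentiable on the whole interval and the
   Leibniz rule on a square applies. *)
definition diagonal_extension :: "(real \<Rightarrow> real \<Rightarrow> real) \<Rightarrow> (real \<Rightarrow> real \<Rightarrow> real) \<Rightarrow> real \<Rightarrow> real \<Rightarrow> real" where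
  "diagonal_extension H Ha a z = (if z \<le> a then H a z else H z z + (a - z) * Ha z z)"

lemma continuous_on_diagonal_extension:
  assumes H: "continuous_on {(a, z). 0 \<le> z \<and> z \<le> a \<and> a \<le> X} (\<lambda>(a, z). H a z)"
    and Ha: "continuous_on {(a, z). 0 \<le> z \<and> z \<le> a \<and> a \<le> X} (\<lambda>(a, z). Ha a z)"
  shows "continuous_on ({0..X} \<times> {0..X}) (\<lambda>(a, z). diagonal_extension H Ha a z)"
proof -
  let ?S = "{0..X} \<times> {0..X}"
  have "continuous_on ?S (\<lambda>p. if snd p - fst p \<le> 0 then H (fst p) (snd p)
          else H (snd p) (snd p) + (fst p - snd p) * Ha (snd p) (snd p))"
  proof (rule continuous_on_cases_le)
    show "continuous_on {p \<in> ?S. snd p - fst p \<le> 0} (\<lambda>p. H (fst p) (snd p))"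
      by (rule continuous_on_compose_case_prod[OF H]) (auto intro!: continuous_intros)
    show "continuous_on {p \<in> ?S. 0 \<le> snd p - fst p}
        (\<lambda>p. H (snd p) (snd p) + (fst p - snd p) * Ha (snd p) (snd p))"
      by (intro continuous_intros continuous_on_compose_case_prod[OF H] continuous_on_compose_case_prod[OF Ha])
        auto
  qed (auto intro!: continuous_intros)
  then show ?thesis
    by (rule continuous_on_eq) (auto simp: diagonal_extension_def)
qed

lemma diagonal_extension_has_real_derivative:
  assumes dH: "\<And>a. z \<le> a \<Longrightarrow> a \<le> X \<Longrightarrow> ((\<lambda>a. H a z) has_real_derivative Ha a z) (at a within {z..X})"
    and z: "0 \<le> z" "z \<le> X" and a: "a \<in> {0..X}"
  shows "((\<lambda>a. diagonal_extension H Ha a z) has_real_derivative diagonal_extension Ha (\<lambda>_ _. 0) a z)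
           (at a within {0..X})"
proof -
  have left: "((\<lambda>a. diagonal_extension H Ha a z) has_real_derivative diagonal_extension Ha (\<lambda>_ _. 0) a z)
      (at a within {0..z})"
  proof (cases "a \<le> z")
    case True
    have "((\<lambda>a. H z z + (a - z) * Ha z z) has_real_derivative Ha z z) (at a within {0..z})"
      by (auto intro!: derivative_eq_intros)
    then have "((\<lambda>a. diagonal_extension H Ha a z) has_real_derivative Ha z z) (at a within {0..z})"
      by (rule has_field_derivative_transform_within[where d=1])
        (use True a in \<open>auto simp: diagonal_extension_def\<close>)
    moreover have "diagonal_extension Ha (\<lambda>_ _. 0) a z = Ha z z"
      using True by (auto simp: diagonal_extension_def)
    ultimately show ?thesis by simp
  next
    case False
    then have "at a within {0..z} = bot"
      by (simp add: not_in_closure_trivial_limitI)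
    then show ?thesis by simp
  qed
  have right: "((\<lambda>a. diagonal_extension H Ha a z) has_real_derivative diagonal_extension Ha (\<lambda>_ _. 0) a z)
      (at a within {z..X})"
  proof (cases "z \<le> a")
    case True
    have "((\<lambda>a. H a z) has_real_derivative Ha a z) (at a within {z..X})"
      using dH True a by auto
    then have "((\<lambda>a. diagonal_extension H Ha a z) has_real_derivative Ha a z) (at a within {z..X})"
      by (rule has_field_derivative_transform_within[where d=1])
        (use True a in \<open>auto simp: diagonal_extension_def\<close>)
    moreover have "diagonal_extension Ha (\<lambda>_ _. 0) a z = Ha a z"
      using True by (simp add: diagonal_extension_def)
    ultimately show ?thesis by simp
  next
    case False
    then have "at a within {z..X} = bot"
      by (simp add: not_in_closure_trivial_limitI)
    then show ?thesis by simp
  qed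
  have "{0..X} = {0..z} \<union> {z..X}"
    using z by auto
  then show ?thesis
    using left right by (simp add: has_field_derivative_iff Lim_within_Un)
qed

lemma C1_partials_on_integral_upper_bound:
  fixes E Ea :: "real \<Rightarrow> real \<Rightarrow> real"
  assumes cE: "continuous_on ({0..X} \<times> {0..X}) (\<lambda>(a, z). E a z)"
    and cEa: "continuous_on ({0..X} \<times> {0..X}) (\<lambda>(a, z). Ea a z)"
    and dE: "\<And>a z. a \<in> {0..X} \<Longrightarrow> z \<in> {0..X} \<Longrightarrow> ((\<lambda>a. E a z) has_real_derivative Ea a z) (at a within {0..X})"
  shows "C1_partials_on ({0..X} \<times> {0..X}) (\<lambda>a b. integral {0..b} (E a)) (\<lambda>a b. integral {0..b} (Ea a)) E"
proof (rule C1_partials_on_TimesI)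
  let ?S = "{0..X} \<times> {0..X}"
  have cE_line: "continuous_on {0..b} (F a)"
    if "continuous_on ?S (\<lambda>(a, z). F a z)" "a \<in> {0..X}" "b \<in> {0..X}" for F a b
    by (rule continuous_on_compose_case_prod[OF that(1), of _ "\<lambda>_. a" "\<lambda>z. z", simplified])
      (use that in \<open>auto intro: continuous_on_const continuous_on_id\<close>)
  show "((\<lambda>a. integral {0..b} (E a)) has_real_derivative integral {0..b} (Ea a)) (at a within {0..X})"
    if "a \<in> {0..X}" "b \<in> {0..X}" for a b
  proof -
    have "((\<lambda>a. integral (cbox 0 b) (E a)) has_real_derivative integral (cbox 0 b) (Ea a))
        (at a within {0..X})"
    proof (rule leibniz_rule_field_derivative)
      show "((\<lambda>a. E a z) has_real_derivative Ea a' z) (at a' within {0..X})"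
        if "a' \<in> {0..X}" "z \<in> cbox 0 b" for a' z
        using dE that \<open>b \<in> {0..X}\<close> by auto
      show "E a' integrable_on cbox 0 b" if "a' \<in> {0..X}" for a'
        using cE_line[OF cE that \<open>b \<in> {0..X}\<close>] by (simp add: integrable_continuous_real)
      show "continuous_on ({0..X} \<times> cbox 0 b) (\<lambda>(a, z). Ea a z)"
        by (rule continuous_on_subset[OF cEa]) (use \<open>b \<in> {0..X}\<close> in auto)
    qed (use that in auto)
    then show ?thesis
      by (simp add: cbox_interval)
  qed
  show "((\<lambda>b. integral {0..b} (E a)) has_real_derivative E a b) (at b within {0..X})"
    if "a \<in> {0..X}" "b \<in> {0..X}" for a b
    using that by (intro integral_has_real_derivative cE_line[OF cE]) auto
  have "continuous_on ?S (\<lambda>p. integral {0..snd p} (Ea (fst p)))"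
  proof (rule continuous_on_integral_bounds)
    show "continuous_on {(p, z). p \<in> ?S \<and> 0 \<le> z \<and> z \<le> snd p} (\<lambda>(p, z). Ea (fst p) z)"
      unfolding case_prod_beta'
      by (rule continuous_on_compose_case_prod[OF cEa]) (auto intro!: continuous_intros)
  qed (auto intro!: continuous_intros)
  then show "continuous_on ?S (\<lambda>(a, b). integral {0..b} (Ea a))"
    by (simp add: case_prod_beta')
qed (use cE in auto)

lemma leibniz_rule_upper_bound:
  fixes H Ha :: "real \<Rightarrow> real \<Rightarrow> real"
  assumes cH: "continuous_on {(a, z). 0 \<le> z \<and> z \<le> a \<and> a \<le> X} (\<lambda>(a, z). H a z)"
    and cHa: "continuous_on {(a, z). 0 \<le> z \<and> z \<le> a \<and> a \<le> X} (\<lambda>(a, z). Ha a z)"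
    and dH: "\<And>a z. 0 \<le> z \<Longrightarrow> z \<le> a \<Longrightarrow> a \<le> X \<Longrightarrow>
               ((\<lambda>a. H a z) has_real_derivative Ha a z) (at a within {z..X})"
    and a0: "a0 \<in> {0..X}"
  shows "((\<lambda>a. integral {0..a} (H a)) has_real_derivative H a0 a0 + integral {0..a0} (Ha a0))
           (at a0 within {0..X})"
proof -
  define E where "E = diagonal_extension H Ha"
  define Ea where "Ea = diagonal_extension Ha (\<lambda>_ _. 0)"
  have "C1_partials_on ({0..X} \<times> {0..X}) (\<lambda>a b. integral {0..b} (E a)) (\<lambda>a b. integral {0..b} (Ea a)) E"
  proof (rule C1_partials_on_integral_upper_bound)
    show "continuous_on ({0..X} \<times> {0..X}) (\<lambda>(a, z). E a z)"
      unfolding E_def using cH cHa by (rule continuous_on_diagonal_extension)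
    show "continuous_on ({0..X} \<times> {0..X}) (\<lambda>(a, z). Ea a z)"
      unfolding Ea_def using cHa by (intro continuous_on_diagonal_extension) (auto intro: continuous_on_const)
    show "((\<lambda>a. E a z) has_real_derivative Ea a z) (at a within {0..X})"
      if "a \<in> {0..X}" "z \<in> {0..X}" for a z
      unfolding E_def Ea_def
      by (rule diagonal_extension_has_real_derivative) (use dH that in auto)
  qed
  then have "((\<lambda>s. integral {0..0 + 1 * s} (E (0 + 1 * s))) has_real_derivative
      1 * integral {0..0 + 1 * a0} (Ea (0 + 1 * a0)) + 1 * E (0 + 1 * a0) (0 + 1 * a0)) (at a0 within {0..X})"
    by (rule C1_partials_on_has_real_derivative_line) (use a0 in auto)
  moreover have "E a0 a0 = H a0 a0" "integral {0..a0} (Ea a0) = integral {0..a0} (Ha a0)"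
    by (auto simp: E_def Ea_def diagonal_extension_def intro!: integral_cong)
  moreover have "integral {0..a} (E a) = integral {0..a} (H a)" for a
    by (auto simp: E_def diagonal_extension_def intro!: integral_cong)
  ultimately show ?thesis
    by (simp add: add.commute)
qed

lemma integral_swap_triangle:
  fixes \<psi> :: "real \<Rightarrow> real \<Rightarrow> real"
  assumes c\<psi>: "continuous_on {(a, y). 0 \<le> y \<and> y \<le> a \<and> a \<le> X} (\<lambda>(a, y). \<psi> a y)" and X: "0 \<le> X"
  shows "integral {0..X} (\<lambda>y. integral {y..X} (\<lambda>\<eta>. \<psi> \<eta> y)) = integral {0..X} (\<lambda>\<eta>. integral {0..\<eta>} (\<psi> \<eta>))"
proof -
  let ?T = "{(a, y). 0 \<le> y \<and> y \<le> a \<and> a \<le> X}"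
  define H where "H a y = integral {y..a} (\<lambda>\<eta>. \<psi> \<eta> y)" for a y
  have cH: "continuous_on ?T (\<lambda>(a, y). H a y)"
  proof -
    have "continuous_on ?T (\<lambda>p. integral {snd p..fst p} (\<lambda>\<eta>. \<psi> \<eta> (snd p)))"
    proof (rule continuous_on_integral_bounds)
      show "continuous_on {(p, z). p \<in> ?T \<and> snd p \<le> z \<and> z \<le> fst p} (\<lambda>(p, z). \<psi> z (snd p))"
        unfolding case_prod_beta'
        by (rule continuous_on_compose_case_prod[OF c\<psi>]) (auto intro!: continuous_intros)
    qed (auto intro!: continuous_intros)
    then show ?thesis
      by (simp add: H_def case_prod_beta')
  qed
  have c\<psi>_line: "continuous_on {y..X} (\<lambda>\<eta>. \<psi> \<eta> y)" if "0 \<le> y" for y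
    by (rule continuous_on_compose_case_prod[OF c\<psi>]) (use that in \<open>auto intro!: continuous_intros\<close>)
  have cQ: "continuous_on {0..X} (\<lambda>\<eta>. integral {0..\<eta>} (\<psi> \<eta>))"
  proof (rule continuous_on_integral_bounds)
    show "continuous_on {(p, z). p \<in> {0..X} \<and> 0 \<le> z \<and> z \<le> p} (\<lambda>(p, z). \<psi> p z)"
      by (rule continuous_on_subset[OF c\<psi>]) auto
  qed (auto intro!: continuous_intros)
  \<comment> \<open>Both sides, as functions of the upper limit, vanish at 0 and have the same derivative.\<close>
  have dP: "((\<lambda>a. integral {0..a} (H a)) has_real_derivative integral {0..a} (\<psi> a)) (at a within {0..X})"
    if "a \<in> {0..X}" for a
  proof -
    have "((\<lambda>a. integral {0..a} (H a)) has_real_derivative H a a + integral {0..a} (\<psi> a)) (at a within {0..X})"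
    proof (rule leibniz_rule_upper_bound[OF cH _ _ that])
      show "((\<lambda>a. H a z) has_real_derivative \<psi> a z) (at a within {z..X})"
        if "0 \<le> z" "z \<le> a" "a \<le> X" for a z
        unfolding H_def by (rule integral_has_real_derivative) (use that c\<psi>_line in auto)
    qed (use c\<psi> in auto)
    then show ?thesis
      by (simp add: H_def)
  qed
  have "integral {0..X} (\<lambda>a. integral {0..a} (\<psi> a)) = integral {0..X} (H X) - integral {0..0} (H 0)"
    by (rule integral_derivative_eq_diff[OF X dP])
  moreover have "integral {0..X} (\<lambda>a. integral {0..a} (\<psi> a)) =
      integral {0..X} (\<lambda>\<eta>. integral {0..\<eta>} (\<psi> \<eta>)) - integral {0..0} (\<lambda>\<eta>. integral {0..\<eta>} (\<psi> \<eta>))"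
    by (rule integral_derivative_eq_diff[OF X integral_has_real_derivative[OF cQ]])
  moreover have "H X = (\<lambda>y. integral {y..X} (\<lambda>\<eta>. \<psi> \<eta> y))"
    by (simp add: H_def fun_eq_iff)
  ultimately show ?thesis
    by simp
qed

definition volterra :: "(real \<Rightarrow> real \<Rightarrow> real) \<Rightarrow> (real \<Rightarrow> real \<Rightarrow> real) \<Rightarrow> real \<Rightarrow> real \<Rightarrow> real" where
  "volterra K w x t = integral {0..x} (\<lambda>y. K x y * w y t)"

lemma volterra_at_0 [simp]: "volterra K w 0 t = 0"
  by (simp add: volterra_def)

lemma volterra_eq_0: "(\<And>y. y \<in> {0..x} \<Longrightarrow> K x y = 0) \<Longrightarrow> volterra K w x t = 0"
  unfolding volterra_def by (subst integral_cong[where g="\<lambda>_. 0"]) auto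

lemma continuous_on_Dom_slice:
  assumes "continuous_on Dom (\<lambda>(x, t). w x t)" "0 \<le> t"
  shows "continuous_on {0..1} (\<lambda>x. w x t)"
  using continuous_on_compose_case_prod[OF assms(1), of "{0..1}" "\<lambda>x. x" "\<lambda>_. t"] assms(2)
  by (auto simp: Dom_def intro: continuous_on_const continuous_on_id)

lemma continuous_on_volterra_integrand:
  fixes K w :: "real \<Rightarrow> real \<Rightarrow> real"
  assumes K: "continuous_on Tri (\<lambda>(x, y). K x y)" and w: "continuous_on Dom (\<lambda>(x, t). w x t)"
    and "x \<in> {0..1}" "0 \<le> t"
  shows "continuous_on {0..x} (\<lambda>y. K x y * w y t)"
proof (rule continuous_on_mult)
  show "continuous_on {0..x} (K x)"
    using continuous_on_compose_case_prod[OF K, of "{0..x}" "\<lambda>_. x" "\<lambda>y. y"] assms(3)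
    by (auto simp: Tri_def intro: continuous_on_const continuous_on_id)
  show "continuous_on {0..x} (\<lambda>y. w y t)"
    by (rule continuous_on_subset[OF continuous_on_Dom_slice[OF w assms(4)]]) (use assms(3) in auto)
qed

lemma integrable_volterra_integrand:
  fixes K w :: "real \<Rightarrow> real \<Rightarrow> real"
  assumes "continuous_on Tri (\<lambda>(x, y). K x y)" "continuous_on Dom (\<lambda>(x, t). w x t)"
    and "x \<in> {0..1}" "0 \<le> t"
  shows "(\<lambda>y. K x y * w y t) integrable_on {0..x}"
  using continuous_on_volterra_integrand[OF assms] by (rule integrable_continuous_real)

lemma continuous_on_volterra:
  assumes K: "continuous_on Tri (\<lambda>(x, y). K x y)" and w: "continuous_on Dom (\<lambda>(x, t). w x t)"
  shows "continuous_on Dom (\<lambda>(x, t). volterra K w x t)"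
proof -
  have "continuous_on Dom (\<lambda>p. integral {0..fst p} (\<lambda>y. K (fst p) y * w y (snd p)))"
  proof (rule continuous_on_integral_bounds)
    show "continuous_on {(p, y). p \<in> Dom \<and> 0 \<le> y \<and> y \<le> fst p} (\<lambda>(p, y). K (fst p) y * w y (snd p))"
      unfolding case_prod_beta'
      by (intro continuous_intros continuous_on_compose_case_prod[OF K] continuous_on_compose_case_prod[OF w])
        (auto simp: Tri_def Dom_def)
  qed (auto simp: Dom_def intro!: continuous_intros)
  then show ?thesis
    by (simp add: volterra_def case_prod_beta')
qed

lemma volterra_has_real_derivative_fst:
  assumes K: "C1_partials_on Tri K K1 K2" and w: "continuous_on Dom (\<lambda>(x, t). w x t)"
    and x: "x \<in> {0..1}" and t: "0 \<le> t"
  shows "((\<lambda>x. volterra K w x t) has_real_derivative K x x * w x t + volterra K1 w x t) (at x within {0..1})"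
  unfolding volterra_def
proof (rule leibniz_rule_upper_bound[where H="\<lambda>a y. K a y * w y t" and Ha="\<lambda>a y. K1 a y * w y t"])
  have "{(a, y). 0 \<le> y \<and> y \<le> a \<and> a \<le> 1} = Tri"
    by (auto simp: Tri_def)
  then show "continuous_on {(a, y). 0 \<le> y \<and> y \<le> a \<and> a \<le> 1} (\<lambda>(a, y). K a y * w y t)"
    "continuous_on {(a, y). 0 \<le> y \<and> y \<le> a \<and> a \<le> 1} (\<lambda>(a, y). K1 a y * w y t)"
    unfolding case_prod_beta' using C1_partials_on_continuous[OF K] C1_partials_on_continuous_partials[OF K]
    by (auto intro!: continuous_intros continuous_on_compose_case_prod[OF w] simp: Dom_def Tri_def t
      elim!: continuous_on_compose_case_prod)
  show "((\<lambda>a. K a y * w y t) has_real_derivative K1 a y * w y t) (at a within {y..1})"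
    if "0 \<le> y" "y \<le> a" "a \<le> 1" for a y
    by (intro DERIV_cmult_right C1_partials_on_has_real_derivative_fst[OF K]) (use that in \<open>auto simp: Tri_def\<close>)
qed (use x in auto)

lemma volterra_has_real_derivative_snd:
  assumes K: "continuous_on Tri (\<lambda>(x, y). K x y)" and w: "C1_partials_on Dom w w1 w2"
    and x: "x \<in> {0..1}" and t: "0 \<le> t"
  shows "((\<lambda>t. volterra K w x t) has_real_derivative volterra K w2 x t) (at t within {0..})"
proof -
  have "((\<lambda>t. integral (cbox 0 x) (\<lambda>y. K x y * w y t)) has_real_derivative
      integral (cbox 0 x) (\<lambda>y. K x y * w2 y t)) (at t within {0..})"
  proof (rule leibniz_rule_field_derivative)
    show "((\<lambda>t. K x y * w y t) has_real_derivative K x y * w2 y s) (at s within {0..})"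
      if "s \<in> {0..}" "y \<in> cbox 0 x" for s y
      by (intro DERIV_cmult C1_partials_on_has_real_derivative_snd[OF w])
        (use that x in \<open>auto simp: Dom_def cbox_interval\<close>)
    show "(\<lambda>y. K x y * w y s) integrable_on cbox 0 x" if "s \<in> {0..}" for s
      using integrable_volterra_integrand[OF K C1_partials_on_continuous[OF w] x] that
      by (simp add: cbox_interval)
    show "continuous_on ({0..} \<times> cbox 0 x) (\<lambda>(t, y). K x y * w2 y t)"
      unfolding case_prod_beta'
      by (intro continuous_intros continuous_on_compose_case_prod[OF K]
          continuous_on_compose_case_prod[OF C1_partials_on_continuous_partials(2)[OF w]])
        (use x in \<open>auto simp: Tri_def Dom_def\<close>)
  qed (use t in auto)
  then show ?thesis
    by (simp add: volterra_def cbox_interval)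
qed

lemma C1_partials_on_volterra:
  assumes K: "C1_partials_on Tri K K1 K2" and w: "C1_partials_on Dom w w1 w2"
  shows "C1_partials_on Dom (volterra K w) (\<lambda>x t. K x x * w x t + volterra K1 w x t) (volterra K w2)"
  unfolding Dom_def
proof (rule C1_partials_on_TimesI)
  note cK = C1_partials_on_continuous[OF K] and cK1 = C1_partials_on_continuous_partials(1)[OF K]
  note cw = C1_partials_on_continuous[OF w] and cw2 = C1_partials_on_continuous_partials(2)[OF w]
  show "((\<lambda>x. volterra K w x t) has_real_derivative K x x * w x t + volterra K1 w x t) (at x within {0..1})"
    if "x \<in> {0..1}" "t \<in> {0..}" for x t
    using volterra_has_real_derivative_fst[OF K cw] that by auto
  show "((\<lambda>t. volterra K w x t) has_real_derivative volterra K w2 x t) (at t within {0..})"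
    if "x \<in> {0..1}" "t \<in> {0..}" for x t
    using volterra_has_real_derivative_snd[OF cK w] that by auto
  have "continuous_on Dom (\<lambda>p. K (fst p) (fst p) * w (fst p) (snd p))"
    by (intro continuous_intros continuous_on_compose_case_prod[OF cK] continuous_on_compose_case_prod[OF cw])
      (auto simp: Tri_def Dom_def)
  then show "continuous_on ({0..1} \<times> {0..}) (\<lambda>(x, t). K x x * w x t + volterra K1 w x t)"
    using continuous_on_volterra[OF cK1 cw]
    by (auto simp: Dom_def case_prod_beta' intro!: continuous_intros)
  show "continuous_on ({0..1} \<times> {0..}) (\<lambda>(x, t). volterra K w2 x t)"
    using continuous_on_volterra[OF cK cw2] by (simp add: Dom_def)
qed simp

lemma transport_characteristic_formula:
  assumes W: "C1_partials_on Dom W Wx Wt"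
    and transport: "\<And>x t. x \<in> {0..1} \<Longrightarrow> 0 \<le> t \<Longrightarrow> Wt x t - Wx x t = S x t"
    and boundary: "\<And>t. 0 \<le> t \<Longrightarrow> W 1 t = B t"
    and x: "x \<in> {0..1}" and t: "1 - x \<le> t"
  shows "W x t = integral {t + x - 1..t} (\<lambda>\<tau>. S (t + x - \<tau>) \<tau>) + B (t + x - 1)"
proof -
  define c where "c = t + x"
  have on_Dom: "(c + (-1) * \<tau>, 0 + 1 * \<tau>) \<in> Dom" if "\<tau> \<in> {c - 1..t}" for \<tau>
    using that x t by (auto simp: Dom_def c_def)
  have "((\<lambda>\<tau>. W (c + (-1) * \<tau>) (0 + 1 * \<tau>)) has_real_derivative
      (-1) * Wx (c + (-1) * \<tau>) (0 + 1 * \<tau>) + 1 * Wt (c + (-1) * \<tau>) (0 + 1 * \<tau>)) (at \<tau> within {c - 1..t})"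
    if "\<tau> \<in> {c - 1..t}" for \<tau>
    by (rule C1_partials_on_has_real_derivative_line[OF W on_Dom that])
  moreover have "Wt (c - \<tau>) \<tau> - Wx (c - \<tau>) \<tau> = S (c - \<tau>) \<tau>" if "\<tau> \<in> {c - 1..t}" for \<tau>
    using on_Dom[OF that] by (intro transport) (auto simp: Dom_def)
  ultimately have "((\<lambda>\<tau>. W (c - \<tau>) \<tau>) has_real_derivative S (c - \<tau>) \<tau>) (at \<tau> within {c - 1..t})"
    if "\<tau> \<in> {c - 1..t}" for \<tau>
    using that by fastforce
  then have "integral {c - 1..t} (\<lambda>\<tau>. S (c - \<tau>) \<tau>) = W x t - W 1 (c - 1)"
    using x by (subst integral_derivative_eq_diff) (auto simp: c_def)
  then show ?thesis
    using boundary[of "c - 1"] x t by (simp add: c_def)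
qed

lemma volterra_integration_by_parts:
  assumes K: "C1_partials_on Tri K K1 K2" and W: "C1_partials_on Dom W Wx Wt"
    and x: "x \<in> {0..1}" and t: "0 \<le> t"
  shows "volterra K Wx x t + volterra K2 W x t = K x x * W x t - K x 0 * W 0 t"
proof -
  have "integral {0..x} (\<lambda>y. K2 x y * W y t + K x y * Wx y t) = K x x * W x t - K x 0 * W 0 t"
  proof (rule integral_derivative_eq_diff)
    show "((\<lambda>y. K x y * W y t) has_real_derivative K2 x y * W y t + K x y * Wx y t) (at y within {0..x})"
      if "y \<in> {0..x}" for y
    proof -
      have "((\<lambda>y. K x y) has_real_derivative K2 x y) (at y within {0..x})"
        by (rule C1_partials_on_has_real_derivative_snd[OF K]) (use that x in \<open>auto simp: Tri_def\<close>)
      moreover have "((\<lambda>y. W y t) has_real_derivative Wx y t) (at y within {0..x})"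
        by (rule C1_partials_on_has_real_derivative_fst[OF W]) (use that x t in \<open>auto simp: Dom_def\<close>)
      ultimately show ?thesis
        by (auto intro!: derivative_eq_intros)
    qed
  qed (use x in auto)
  moreover have "integral {0..x} (\<lambda>y. K2 x y * W y t + K x y * Wx y t) = volterra K Wx x t + volterra K2 W x t"
    using C1_partials_on_continuous[OF K] C1_partials_on_continuous_partials[OF K]
      C1_partials_on_continuous[OF W] C1_partials_on_continuous_partials[OF W] x t
    by (simp add: volterra_def integral_add integrable_volterra_integrand add.commute)
  ultimately show ?thesis
    by simp
qed

lemma integral_volterra_swap:
  fixes F K W :: "real \<Rightarrow> real \<Rightarrow> real"
  assumes F: "continuous_on Tri (\<lambda>(x, y). F x y)" and K: "continuous_on Tri (\<lambda>(x, y). K x y)"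
    and W: "continuous_on Dom (\<lambda>(x, t). W x t)" and x: "x \<in> {0..1}" and t: "0 \<le> t"
  shows "integral {0..x} (\<lambda>y. integral {y..x} (\<lambda>\<eta>. F x \<eta> * K \<eta> y) * W y t)
       = integral {0..x} (\<lambda>\<eta>. F x \<eta> * volterra K W \<eta> t)"
proof -
  have "continuous_on {(a, y). 0 \<le> y \<and> y \<le> a \<and> a \<le> x} (\<lambda>(a, y). F x a * K a y * W y t)"
    unfolding case_prod_beta'
    by (intro continuous_intros continuous_on_compose_case_prod[OF F] continuous_on_compose_case_prod[OF K]
        continuous_on_compose_case_prod[OF W])
      (use x t in \<open>auto simp: Tri_def Dom_def\<close>)
  from integral_swap_triangle[OF this] x
  have "integral {0..x} (\<lambda>y. integral {y..x} (\<lambda>\<eta>. F x \<eta> * K \<eta> y * W y t))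
      = integral {0..x} (\<lambda>\<eta>. integral {0..\<eta>} (\<lambda>y. F x \<eta> * K \<eta> y * W y t))"
    by simp
  then show ?thesis
    by (simp add: volterra_def integral_mult_left[symmetric] mult.assoc)
qed

lemma volterra_transform_partials:
  assumes k: "C1_partials_on Tri k kx ky" and W: "C1_partials_on Dom W Wx Wt"
    and uh: "C1_partials_on Dom uh uhx uht"
    and uh_W: "\<And>x t. x \<in> {0..1} \<Longrightarrow> 0 \<le> t \<Longrightarrow> uh x t = W x t - volterra k W x t"
    and x: "x \<in> {0..1}" and t: "0 \<le> t"
  shows "uhx x t = Wx x t - (k x x * W x t + volterra kx W x t)"
    and "uht x t = Wt x t - volterra k Wt x t"
proof -
  note V = C1_partials_on_volterra[OF k W]
  have on_Dom: "(x', t) \<in> Dom" if "x' \<in> {0..1}" for x'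
    using that t by (auto simp: Dom_def)
  have on_Dom': "(x, t') \<in> Dom" if "t' \<ge> 0" for t'
    using that x by (auto simp: Dom_def)
  show "uhx x t = Wx x t - (k x x * W x t + volterra kx W x t)"
  proof (rule has_real_derivative_unique_Icc[of 0 1 x "\<lambda>x. uh x t"])
    show "((\<lambda>x. uh x t) has_real_derivative uhx x t) (at x within {0..1})"
      by (rule C1_partials_on_has_real_derivative_fst[OF uh]) (use on_Dom x in auto)
    have "((\<lambda>x. W x t - volterra k W x t) has_real_derivative Wx x t - (k x x * W x t + volterra kx W x t))
        (at x within {0..1})"
      by (intro DERIV_diff C1_partials_on_has_real_derivative_fst[OF W] C1_partials_on_has_real_derivative_fst[OF V])
        (use on_Dom x in auto)
    then show "((\<lambda>x. uh x t) has_real_derivative Wx x t - (k x x * W x t + volterra kx W x t)) (at x within {0..1})"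
      by (rule has_field_derivative_transform_within[where d=1]) (use x t uh_W in auto)
  qed (use x in auto)
  show "uht x t = Wt x t - volterra k Wt x t"
  proof (rule has_real_derivative_unique_Icc[of t "t + 1" t "\<lambda>t. uh x t"])
    show "((\<lambda>t. uh x t) has_real_derivative uht x t) (at t within {t..t + 1})"
      by (rule C1_partials_on_has_real_derivative_snd[OF uh]) (use on_Dom' t in auto)
    have "((\<lambda>t. W x t - volterra k W x t) has_real_derivative Wt x t - volterra k Wt x t) (at t within {t..t + 1})"
      by (intro DERIV_diff C1_partials_on_has_real_derivative_snd[OF W] C1_partials_on_has_real_derivative_snd[OF V])
        (use on_Dom' t in auto)
    then show "((\<lambda>t. uh x t) has_real_derivative Wt x t - volterra k Wt x t) (at t within {t..t + 1})"
      by (rule has_field_derivative_transform_within[where d=1]) (use x t uh_W in auto)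
  qed (use t in auto)
qed

lemma backstepping_target_identity:
  fixes f k kx ky W Wx Wt uh uhx uht :: "real \<Rightarrow> real \<Rightarrow> real" and g Y :: "real \<Rightarrow> real"
  assumes f: "continuous_on Tri (\<lambda>(x, y). f x y)"
    and k: "C1_partials_on Tri k kx ky"
    and k_pde: "\<forall>x y. (x, y) \<in> Tri \<longrightarrow>
          ky x y + kx x y = f x y - integral {y..x} (\<lambda>\<eta>. f x \<eta> * k \<eta> y)"
    and W: "C1_partials_on Dom W Wx Wt"
    and uh: "C1_partials_on Dom uh uhx uht"
    and uh_W: "\<And>x t. x \<in> {0..1} \<Longrightarrow> 0 \<le> t \<Longrightarrow> uh x t = W x t - volterra k W x t"
    and uh_pde: "\<forall>x t. x \<in> {0..1} \<and> 0 \<le> t \<longrightarrow>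
          uht x t = uhx x t + g x * uh 0 t + integral {0..x} (\<lambda>y. f x y * uh y t)
                    + (g x - k x 0) * (Y t - uh 0 t)"
    and x: "x \<in> {0..1}" and t: "0 \<le> t"
  shows "(Wt x t - Wx x t) - volterra k (\<lambda>x t. Wt x t - Wx x t) x t = (g x - k x 0) * Y t"
proof -
  note ck = C1_partials_on_continuous[OF k] and ckx = C1_partials_on_continuous_partials(1)[OF k]
    and cky = C1_partials_on_continuous_partials(2)[OF k]
  note cW = C1_partials_on_continuous[OF W] and cWx = C1_partials_on_continuous_partials(1)[OF W]
    and cWt = C1_partials_on_continuous_partials(2)[OF W]
  note uhx_uht = volterra_transform_partials[OF k W uh uh_W x t]
  have parts: "volterra k Wx x t + volterra ky W x t = k x x * W x t - k x 0 * W 0 t"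
    by (rule volterra_integration_by_parts[OF k W x t])
  have kernel: "integral {0..x} (\<lambda>y. f x y * W y t) - (volterra kx W x t + volterra ky W x t)
      = integral {0..x} (\<lambda>y. f x y * volterra k W y t)"
  proof -
    have "integral {0..x} (\<lambda>y. f x y * W y t) - (volterra kx W x t + volterra ky W x t)
        = integral {0..x} (\<lambda>y. f x y * W y t - (kx x y * W y t + ky x y * W y t))"
      using x t by (simp add: volterra_def integral_add integral_diff integrable_volterra_integrand
          f ckx cky cW integrable_add)
    also have "\<dots> = integral {0..x} (\<lambda>y. integral {y..x} (\<lambda>\<eta>. f x \<eta> * k \<eta> y) * W y t)"
    proof (rule integral_cong)
      fix y assume "y \<in> {0..x}"
      then have "f x y = kx x y + ky x y + integral {y..x} (\<lambda>\<eta>. f x \<eta> * k \<eta> y)"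
        using k_pde[rule_format, of x y] x by (auto simp: Tri_def)
      then show "f x y * W y t - (kx x y * W y t + ky x y * W y t)
          = integral {y..x} (\<lambda>\<eta>. f x \<eta> * k \<eta> y) * W y t"
        by (simp add: algebra_simps)
    qed
    also have "\<dots> = integral {0..x} (\<lambda>y. f x y * volterra k W y t)"
      by (rule integral_volterra_swap[OF f ck cW x t])
    finally show ?thesis .
  qed
  have f_uh: "integral {0..x} (\<lambda>y. f x y * uh y t)
      = integral {0..x} (\<lambda>y. f x y * W y t) - integral {0..x} (\<lambda>y. f x y * volterra k W y t)"
  proof -
    have "integral {0..x} (\<lambda>y. f x y * uh y t) = integral {0..x} (\<lambda>y. f x y * W y t - f x y * volterra k W y t)"
      by (rule integral_cong) (use x t uh_W in \<open>auto simp: right_diff_distrib\<close>)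
    then show ?thesis
      using x t by (simp add: integral_diff integrable_volterra_integrand f cW continuous_on_volterra[OF ck cW])
  qed
  have split: "volterra k (\<lambda>x t. Wt x t - Wx x t) x t = volterra k Wt x t - volterra k Wx x t"
    using x t by (simp add: volterra_def right_diff_distrib integral_diff integrable_volterra_integrand ck cWt cWx)
  have "uh 0 t = W 0 t"
    using uh_W[of 0 t] t by simp
  then show ?thesis
    using uh_pde[rule_format, of x t] x t uhx_uht parts kernel f_uh split by (simp add: algebra_simps)
qed

lemma inverse_kernel_solve:
  fixes k l :: "real \<Rightarrow> real \<Rightarrow> real" and r q :: "real \<Rightarrow> real"
  assumes l_inv: "\<forall>w. continuous_on {0..1} w \<longrightarrow>
          (\<forall>x\<in>{0..1}. (\<lambda>s. w s - integral {0..s} (\<lambda>y. k s y * w y)) x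
             + integral {0..x} (\<lambda>y. l x y * (w y - integral {0..y} (\<lambda>z. k y z * w z))) = w x)"
    and r: "continuous_on {0..1} r"
    and eq: "\<And>x. x \<in> {0..1} \<Longrightarrow> r x - integral {0..x} (\<lambda>y. k x y * r y) = q x * c"
    and x: "x \<in> {0..1}"
  shows "r x = (q x + integral {0..x} (\<lambda>y. l x y * q y)) * c"
proof -
  have "integral {0..x} (\<lambda>y. l x y * (r y - integral {0..y} (\<lambda>z. k y z * r z)))
      = integral {0..x} (\<lambda>y. l x y * q y) * c"
    unfolding integral_mult_left[symmetric]
    by (rule integral_cong) (use eq x in auto)
  then show ?thesis
    using l_inv r x eq[OF x] by (force simp: algebra_simps)
qed

theorem theorem3:
  fixes f k kx ky l :: "real \<Rightarrow> real \<Rightarrow> real"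
    and g U U' u0 u0' uh0 uh0' :: "real \<Rightarrow> real"
    and u ux ut uh uhx uht :: "real \<Rightarrow> real \<Rightarrow> real"
  assumes f_C1: "C1_on2 Tri f"
    and g_C1: "\<exists>g'. C1_deriv_on {0..1} g g'"
    and k_C1: "C1_partials_on Tri k kx ky"
    and k_pde: "\<forall>x y. (x, y) \<in> Tri \<longrightarrow>
          ky x y + kx x y = f x y - integral {y..x} (\<lambda>\<eta>. f x \<eta> * k \<eta> y)"
    and k_bc: "\<forall>y\<in>{0..1}. k 1 y = 0"
    and l_C1: "C1_on2 Tri l"
    and l_inv1: "\<forall>w. continuous_on {0..1} w \<longrightarrow>
          (\<forall>x\<in>{0..1}. (\<lambda>s. w s - integral {0..s} (\<lambda>y. k s y * w y)) x
             + integral {0..x} (\<lambda>y. l x y * (w y - integral {0..y} (\<lambda>z. k y z * w z))) = w x)"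
    and l_inv2: "\<forall>v. continuous_on {0..1} v \<longrightarrow>
          (\<forall>x\<in>{0..1}. (v x + integral {0..x} (\<lambda>y. l x y * v y))
             - integral {0..x} (\<lambda>y. k x y * (v y + integral {0..y} (\<lambda>z. l y z * v z))) = v x)"
    and U_C1: "C1_deriv_on {0..} U U'"
    and u0_C1: "C1_deriv_on {0..1} u0 u0'"
    and uh0_C1: "C1_deriv_on {0..1} uh0 uh0'"
    and compat1: "u0 1 = U 0"
    and compat2: "U' 0 = u0' 1 + g 1 * u0 0 + integral {0..1} (\<lambda>y. f 1 y * u0 y)"
    and compat3: "uh0 1 = U 0"
    and compat4: "U' 0 = uh0' 1 + g 1 * uh0 0 + integral {0..1} (\<lambda>y. f 1 y * uh0 y)
                          + (g 1 - k 1 0) * (u0 0 - uh0 0)"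
    and u_C1: "C1_partials_on Dom u ux ut"
    and u_pde: "\<forall>x t. x \<in> {0..1} \<and> 0 \<le> t \<longrightarrow>
          ut x t = ux x t + g x * u 0 t + integral {0..x} (\<lambda>y. f x y * u y t)"
    and u_bc: "\<forall>t\<ge>0. u 1 t = U t"
    and u_ic: "\<forall>x\<in>{0..1}. u x 0 = u0 x"
    and uh_C1: "C1_partials_on Dom uh uhx uht"
    and uh_pde: "\<forall>x t. x \<in> {0..1} \<and> 0 \<le> t \<longrightarrow>
          uht x t = uhx x t + g x * uh 0 t + integral {0..x} (\<lambda>y. f x y * uh y t)
                    + (g x - k x 0) * (u 0 t - uh 0 t)"
    and uh_bc: "\<forall>t\<ge>0. uh 1 t = U t"
    and uh_ic: "\<forall>x\<in>{0..1}. uh x 0 = uh0 x"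
  shows "let p1 = (\<lambda>x. g x - k x 0);
             \<theta> = (\<lambda>x. p1 x + integral {0..x} (\<lambda>y. l x y * p1 y));
             Y = (\<lambda>\<tau>. u 0 \<tau>);
             wh = (\<lambda>x t. integral {t + x - 1..t} (\<lambda>\<tau>. \<theta> (t + x - \<tau>) * Y \<tau>) + U (t + x - 1))
         in \<forall>t\<ge>1. \<forall>x\<in>{0..1}. uh x t = wh x t - integral {0..x} (\<lambda>y. k x y * wh y t)"
proof -
  (* The plant equation, the initial data and the compatibility conditions only
     guarantee the classical solutions that the statement already assumes. *)
  obtain f1 f2 where f: "C1_partials_on Tri f f1 f2"
    using f_C1 by (auto simp: C1_on2_def)
  obtain l1 l2 where l: "C1_partials_on Tri l l1 l2"
    using l_C1 by (auto simp: C1_on2_def)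
  define \<theta> where "\<theta> x = (g x - k x 0) + integral {0..x} (\<lambda>y. l x y * (g y - k y 0))" for x
  define W where "W x t = uh x t + volterra l uh x t" for x t
  obtain Wx Wt where W_C1: "C1_partials_on Dom W Wx Wt"
    using C1_partials_on_add[OF uh_C1 C1_partials_on_volterra[OF l uh_C1]] unfolding W_def[abs_def] by blast
  have uh_W: "uh x t = W x t - volterra k W x t" if "x \<in> {0..1}" "0 \<le> t" for x t
    using l_inv2 continuous_on_Dom_slice[OF C1_partials_on_continuous[OF uh_C1] that(2)] that(1)
    by (auto simp: W_def volterra_def)
  have transport: "Wt x t - Wx x t = \<theta> x * u 0 t" if "x \<in> {0..1}" "0 \<le> t" for x t
  proof (rule inverse_kernel_solve[OF l_inv1 _ _ that(1), of _ "\<lambda>x. g x - k x 0", folded \<theta>_def])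
    show "continuous_on {0..1} (\<lambda>x. Wt x t - Wx x t)"
      using W_C1 that(2) unfolding C1_partials_on_def
      by (auto intro!: continuous_intros continuous_on_Dom_slice simp: case_prod_beta')
    show "Wt x t - Wx x t - integral {0..x} (\<lambda>y. k x y * (Wt y t - Wx y t)) = (g x - k x 0) * u 0 t"
      if "x \<in> {0..1}" for x
      using backstepping_target_identity[OF C1_partials_on_continuous[OF f] k_C1 k_pde W_C1 uh_C1 uh_W
          uh_pde that \<open>0 \<le> t\<close>]
      by (simp add: volterra_def)
  qed
  have boundary: "W 1 t = U t" if "0 \<le> t" for t
    using uh_W[of 1 t] uh_bc k_bc volterra_eq_0[of 1 k W t] that by simp
  define wh where "wh x t = integral {t + x - 1..t} (\<lambda>\<tau>. \<theta> (t + x - \<tau>) * u 0 \<tau>) + U (t + x - 1)" for x t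
  have "uh x t = wh x t - integral {0..x} (\<lambda>y. k x y * wh y t)" if "1 \<le> t" "x \<in> {0..1}" for t x
  proof -
    have "W y t = wh y t" if "y \<in> {0..1}" for y
      using transport_characteristic_formula[OF W_C1 transport boundary that] \<open>1 \<le> t\<close> that
      by (auto simp: wh_def)
    then show ?thesis
      using uh_W[of x t] that by (auto simp: volterra_def intro!: integral_cong)
  qed
  then show ?thesis
    by (simp add: Let_def wh_def \<theta>_def)
qed

end
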